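(* In the Call-by-Value probabilistic $\lambda$-calculus (as defined in the context), the full lifting $\Rrightarrow_E$ of $\rightsquigarrow_E$ is $\mathrm{obs}_{\mathrm{Nnf}}$-diamond: for all multi-distributions $\mathbf m,\mathbf n_1,\mathbf n_2$ with $\mathbf m\Rrightarrow_E\mathbf n_1$ and $\mathbf m\Rrightarrow_E\mathbf n_2$, either $\mathbf n_1=\mathbf n_2$ or there is $\mathbf s$ with $\mathbf n_1\Rrightarrow_E\mathbf s$ and $\mathbf n_2\Rrightarrow_E\mathbf s$; and moreover $\mathrm{obs}_{\mathrm{Nnf}}(\mathbf n_1)=\mathrm{obs}_{\mathrm{Nnf}}(\mathbf n_2)$.
   Context: Terms $\Lambda_\oplus$: $M::=x\mid\lambda x.M\mid MM\mid M\oplus M$; values $V::=x\mid\lambda x.M$. Contexts $C::=[\,]\mid MC\mid CM\mid\lambda x.C\mid C\oplus M\mid M\oplus C$; weak contexts $W::=[\,]\mid WM\mid MW$. A multi-distribution is a finite multiset $[p_iM_i]_{i\in I}$ with $p_i\in(0,1]$, $\sum_ip_i\le1$; $+$ is multiset union, $q\cdot[p_iM_i]_i=[(qp_i)M_i]_i$, $[M]:=[1M]$. $C[(\lambda x.M)V]\to_{\beta_v}[C[M\{V/x\}]]$; $W[M\oplus N]\to_\oplus[\tfrac12W[M],\tfrac12W[N]]$; $\to:=\to_{\beta_v}\cup\to_\oplus$; surface reduction $\to_s$ is $\to_\oplus$ together with the closure of $\beta_v$ under weak contexts. $M$ is $\to$-normal (surface-normal) if no $\mathbf m$ with $M\to\mathbf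 m$ ($M\to_s\mathbf m$); $\mathrm{Nnf}$ is the set of $\to$-normal terms. Let $\rightsquigarrow_U$ be the unbiased iteration of weak $\beta_v$-reduction on $\Lambda_\oplus$: if $M\to_wM'$ (closure of $\beta_v$ under weak contexts) then $M\rightsquigarrow_UM'$; if $M$ is $\to_w$-normal: $\lambda x.P\rightsquigarrow_U\lambda x.P'$, $PQ\rightsquigarrow_UP'Q$, $PQ\rightsquigarrow_UPQ'$, $P\oplus Q\rightsquigarrow_UP'\oplus Q$, $P\oplus Q\rightsquigarrow_UP\oplus Q'$ whenever $P\rightsquigarrow_UP'$, resp. $Q\rightsquigarrow_UQ'$. $\rightsquigarrow_E$: if $M$ is not surface-normal and $M\to_s\mathbf m$ then $M\rightsquigarrow_E\mathbf m$; if $M$ is surface-normal and $M\rightsquigarrow_UM'$ then $M\rightsquigarrow_E[M']$. The full lifting $\Rrightarrow_E$ is the least relation with: $[M]\Rrightarrow_E[M]$ if $M$ is $\to$-normal; $[M]\Rrightarrow_E\mathbf m$ if $M\rightsquigarrow_E\mathbf m$; $[p_iM_i]_{i\in I}\Rrightarrow_E\sum_ip_i\cdot\mathbf m_i$ if $[M_i]\Rrightarrow_E\mathbf m_i$ for all $i$. $\mathrm{obs}_{\mathrm{Nnf}}([p_iM_i]_{i\in I})$ is the subdistribution $\mu$ on $\mathrm{Nnf}$ with $\mu(N)=\sum_{i:\,M_i=N}p_i$. *)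

theory Defs
  imports Complex_Main "HOL-Library.Multiset"
begin

datatype trm = Var nat | Lam trm | App trm trm | Choice trm trm

fun is_value :: "trm \<Rightarrow> bool" where
  "is_value (Var _) = True"
| "is_value (Lam _) = True"
| "is_value _ = False"

fun lift :: "nat \<Rightarrow> trm \<Rightarrow> trm" where
  "lift k (Var i) = (if i < k then Var i else Var (Suc i))"
| "lift k (Lam M) = Lam (lift (Suc k) M)"
| "lift k (App M N) = App (lift k M) (lift k N)"
| "lift k (Choice M N) = Choice (lift k M) (lift k N)"

text \<open>subst M k N: capture-avoiding substitution of N for index k in M
  (indices above k are decremented, since the binder is removed).\<close>
fun subst :: "trm \<Rightarrow> nat \<Rightarrow> trm \<Rightarrow> trm" where
  "subst (Var i) k N = (if i < k then Var i else if i = k then N else Var (i - 1))"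
| "subst (Lam M) k N = Lam (subst M (Suc k) (lift 0 N))"
| "subst (App M M') k N = App (subst M k N) (subst M' k N)"
| "subst (Choice M M') k N = Choice (subst M k N) (subst M' k N)"

inductive beta :: "trm \<Rightarrow> trm \<Rightarrow> bool" where
  beta_root: "is_value V \<Longrightarrow> beta (App (Lam M) V) (subst M 0 V)"
| beta_appL: "beta M M' \<Longrightarrow> beta (App M N) (App M' N)"
| beta_appR: "beta N N' \<Longrightarrow> beta (App M N) (App M N')"
| beta_lam: "beta M M' \<Longrightarrow> beta (Lam M) (Lam M')"
| beta_choiceL: "beta M M' \<Longrightarrow> beta (Choice M N) (Choice M' N)"
| beta_choiceR: "beta N N' \<Longrightarrow> beta (Choice M N) (Choice M N')"

inductive wbeta :: "trm \<Rightarrow> trm \<Rightarrow> bool" where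
  wbeta_root: "is_value V \<Longrightarrow> wbeta (App (Lam M) V) (subst M 0 V)"
| wbeta_appL: "wbeta M M' \<Longrightarrow> wbeta (App M N) (App M' N)"
| wbeta_appR: "wbeta N N' \<Longrightarrow> wbeta (App M N) (App M N')"

text \<open>choice_redex M L R: M = W[P \<oplus> Q], L = W[P], R = W[Q] for a weak context W\<close>
inductive choice_redex :: "trm \<Rightarrow> trm \<Rightarrow> trm \<Rightarrow> bool" where
  cr_root: "choice_redex (Choice P Q) P Q"
| cr_appL: "choice_redex M L R \<Longrightarrow> choice_redex (App M N) (App L N) (App R N)"
| cr_appR: "choice_redex N L R \<Longrightarrow> choice_redex (App M N) (App M L) (App M R)"

type_synonym mdist = "(real \<times> trm) multiset"

definition is_mdist :: "mdist \<Rightarrow> bool" where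
  "is_mdist m \<longleftrightarrow> (\<forall>x \<in># m. 0 < fst x \<and> fst x \<le> 1) \<and> sum_mset (image_mset fst m) \<le> 1"

definition dirac :: "trm \<Rightarrow> mdist" where
  "dirac M = {#(1, M)#}"

definition scale :: "real \<Rightarrow> mdist \<Rightarrow> mdist" where
  "scale q m = image_mset (\<lambda>(p, M). (q * p, M)) m"

definition red_oplus :: "trm \<Rightarrow> mdist \<Rightarrow> bool" where
  "red_oplus M m \<longleftrightarrow> (\<exists>L R. choice_redex M L R \<and> m = {#(1/2, L), (1/2, R)#})"

definition red :: "trm \<Rightarrow> mdist \<Rightarrow> bool" where
  "red M m \<longleftrightarrow> (\<exists>M'. beta M M' \<and> m = dirac M') \<or> red_oplus M m"

definition sred :: "trm \<Rightarrow> mdist \<Rightarrow> bool" where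
  "sred M m \<longleftrightarrow> (\<exists>M'. wbeta M M' \<and> m = dirac M') \<or> red_oplus M m"

definition normal :: "trm \<Rightarrow> bool" where
  "normal M \<longleftrightarrow> \<not> (\<exists>m. red M m)"

definition surface_normal :: "trm \<Rightarrow> bool" where
  "surface_normal M \<longleftrightarrow> \<not> (\<exists>m. sred M m)"

definition wnormal :: "trm \<Rightarrow> bool" where
  "wnormal M \<longleftrightarrow> \<not> (\<exists>M'. wbeta M M')"

inductive redU :: "trm \<Rightarrow> trm \<Rightarrow> bool" where
  U_w: "wbeta M M' \<Longrightarrow> redU M M'"
| U_lam: "wnormal (Lam P) \<Longrightarrow> redU P P' \<Longrightarrow> redU (Lam P) (Lam P')"
| U_appL: "wnormal (App P Q) \<Longrightarrow> redU P P' \<Longrightarrow> redU (App P Q) (App P' Q)"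
| U_appR: "wnormal (App P Q) \<Longrightarrow> redU Q Q' \<Longrightarrow> redU (App P Q) (App P Q')"
| U_choiceL: "wnormal (Choice P Q) \<Longrightarrow> redU P P' \<Longrightarrow> redU (Choice P Q) (Choice P' Q)"
| U_choiceR: "wnormal (Choice P Q) \<Longrightarrow> redU Q Q' \<Longrightarrow> redU (Choice P Q) (Choice P Q')"

inductive redE :: "trm \<Rightarrow> mdist \<Rightarrow> bool" where
  E_surf: "\<not> surface_normal M \<Longrightarrow> sred M m \<Longrightarrow> redE M m"
| E_U: "surface_normal M \<Longrightarrow> redU M M' \<Longrightarrow> redE M (dirac M')"

text \<open>Full lifting \<Rrightarrow>_E. The family [p_i M_i]_{i \<in> I} together with the chosen
  m_i is represented by a finite multiset F of triples (p_i, M_i, m_i).\<close>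
inductive liftE :: "mdist \<Rightarrow> mdist \<Rightarrow> bool" where
  L_normal: "normal M \<Longrightarrow> liftE (dirac M) (dirac M)"
| L_step: "redE M m \<Longrightarrow> liftE (dirac M) m"
| L_sum: "(\<forall>x \<in># F. liftE (dirac (fst (snd x))) (snd (snd x))) \<Longrightarrow>
          liftE (image_mset (\<lambda>(p, M, _). (p, M)) F)
                (sum_mset (image_mset (\<lambda>(p, _, m). scale p m) F))"

definition obs_Nnf :: "mdist \<Rightarrow> trm \<Rightarrow> real" where
  "obs_Nnf m N = (if normal N then sum_mset (image_mset fst (filter_mset (\<lambda>x. snd x = N) m)) else 0)"

end

theory Submission
  imports Defs
begin

text \<open>
  The lifting acts on the terms of a multi-distribution independently and recombines the
  results linearly, so the diamond property reduces to a single term \<open>M\<close>. Surface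
  normality of \<open>M\<close> decides which clause of \<open>\<rightsquigarrow>\<^sub>E\<close> applies, so two steps from \<open>M\<close> are
  either both surface steps or both \<open>\<rightsquigarrow>\<^sub>U\<close>-steps. Any two weak \<open>\<beta>\<^sub>v\<close>- or
  \<open>\<oplus>\<close>-steps (in weak contexts) commute, and \<open>\<rightsquigarrow>\<^sub>U\<close> is diamond, so two distinct steps
  close after one more step on each side. Every term they produce then still
  reduces, so neither result has mass on normal forms and the observations agree.
\<close>

lemma not_wbeta_simps [simp]: "\<not> wbeta (Var i) X" "\<not> wbeta (Lam P) X" "\<not> wbeta (Choice P Q) X"
  by (auto elim: wbeta.cases)

lemma value_not_wbeta: "is_value V \<Longrightarrow> \<not> wbeta V X"
  by (cases V) auto

lemma wnormal_simps [simp]: "wnormal (Var i)" "wnormal (Lam P)" "wnormal (Choice P Q)"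
  by (simp_all add: wnormal_def)

lemma wnormal_App_iff:
  "wnormal (App P Q) \<longleftrightarrow> wnormal P \<and> wnormal Q \<and> \<not> ((\<exists>B. P = Lam B) \<and> is_value Q)"
  unfolding wnormal_def by (auto intro: wbeta.intros elim: wbeta.cases)

lemma wbeta_diamond:
  "wbeta M M1 \<Longrightarrow> wbeta M M2 \<Longrightarrow> M1 = M2 \<or> (\<exists>N. wbeta M1 N \<and> wbeta M2 N)"
proof (induction arbitrary: M2 rule: wbeta.induct)
  case (wbeta_root V M)
  from wbeta_root.prems show ?case
    by cases (use wbeta_root.hyps value_not_wbeta in auto)
next
  case (wbeta_appL M M' N)
  from wbeta_appL.prems show ?case
  proof cases
    case (wbeta_appL X)
    then show ?thesis using wbeta_appL.IH[of X] by (metis wbeta.wbeta_appL)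
  qed (use wbeta_appL.hyps in \<open>auto intro: wbeta.intros\<close>)
next
  case (wbeta_appR N N' M)
  from wbeta_appR.prems show ?case
  proof cases
    case (wbeta_appR X)
    then show ?thesis using wbeta_appR.IH[of X] by (metis wbeta.wbeta_appR)
  qed (use wbeta_appR.hyps value_not_wbeta in \<open>auto intro: wbeta.intros\<close>)
qed

lemma redU_preserves_wnormal:
  "redU P P' \<Longrightarrow> wnormal P \<Longrightarrow>
    wnormal P' \<and> ((\<exists>B. P' = Lam B) \<longleftrightarrow> (\<exists>B. P = Lam B)) \<and> (is_value P' \<longleftrightarrow> is_value P)"
proof (induction rule: redU.induct)
  case (U_w M M')
  then show ?case by (simp add: wnormal_def)
qed (auto simp: wnormal_App_iff)

lemma wnormal_App_redU:
  assumes "wnormal (App P Q)"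
  shows "redU P P' \<Longrightarrow> wnormal (App P' Q)" and "redU Q Q' \<Longrightarrow> wnormal (App P Q')"
  using assms redU_preserves_wnormal unfolding wnormal_App_iff by metis+

lemma redU_diamond: "redU M M1 \<Longrightarrow> redU M M2 \<Longrightarrow> M1 = M2 \<or> (\<exists>N. redU M1 N \<and> redU M2 N)"
proof (induction arbitrary: M2 rule: redU.induct)
  case (U_w M M')
  from U_w.prems show ?case
  proof cases
    case U_w
    then show ?thesis using wbeta_diamond[OF U_w.hyps] by (metis redU.U_w)
  qed (use U_w.hyps in \<open>auto simp: wnormal_def\<close>)
next
  case (U_lam P P')
  from U_lam.prems show ?case
  proof cases
    case (U_lam X)
    then show ?thesis using U_lam.IH[of X] by (metis redU.U_lam wnormal_simps(2))
  qed (auto simp: wnormal_def)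
next
  case (U_appL P Q P')
  from U_appL.prems show ?case
  proof cases
    case (U_appL X)
    then show ?thesis using U_appL.IH[of X] U_appL.hyps by (metis redU.U_appL wnormal_App_redU(1))
  next
    case (U_appR X)
    then show ?thesis using U_appL.hyps by (metis redU.U_appL redU.U_appR wnormal_App_redU)
  qed (use U_appL.hyps in \<open>auto simp: wnormal_def\<close>)
next
  case (U_appR P Q Q')
  from U_appR.prems show ?case
  proof cases
    case (U_appL X)
    then show ?thesis using U_appR.hyps by (metis redU.U_appL redU.U_appR wnormal_App_redU)
  next
    case (U_appR X)
    then show ?thesis using U_appR.IH[of X] U_appR.hyps by (metis redU.U_appR wnormal_App_redU(2))
  qed (use U_appR.hyps in \<open>auto simp: wnormal_def\<close>)
next
  case (U_choiceL P Q P')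
  from U_choiceL.prems show ?case
  proof cases
    case (U_choiceL X)
    then show ?thesis using U_choiceL.IH[of X] by (metis redU.U_choiceL wnormal_simps(3))
  next
    case (U_choiceR X)
    then show ?thesis using U_choiceL.hyps by (metis redU.U_choiceL redU.U_choiceR wnormal_simps(3))
  qed (auto simp: wnormal_def)
next
  case (U_choiceR P Q Q')
  from U_choiceR.prems show ?case
  proof cases
    case (U_choiceL X)
    then show ?thesis using U_choiceR.hyps by (metis redU.U_choiceL redU.U_choiceR wnormal_simps(3))
  next
    case (U_choiceR X)
    then show ?thesis using U_choiceR.IH[of X] by (metis redU.U_choiceR wnormal_simps(3))
  qed (auto simp: wnormal_def)
qed

lemma wbeta_imp_beta: "wbeta M N \<Longrightarrow> beta M N"
  by (induction rule: wbeta.induct) (auto intro: beta.intros)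

lemma redU_imp_beta: "redU M N \<Longrightarrow> beta M N"
  by (induction rule: redU.induct) (auto intro: beta.intros wbeta_imp_beta)

lemma beta_imp_ex_redU: "beta M M' \<Longrightarrow> \<exists>M''. redU M M''"
proof (induction rule: beta.induct)
  case (beta_root V M)
  then show ?case by (blast intro: redU.intros wbeta.intros)
next
  case (beta_appL M M' N)
  then obtain X where "redU M X" by blast
  then show ?case by (metis redU.U_appL redU.U_w wnormal_def)
next
  case (beta_appR M M' N)
  then obtain X where "redU M X" by blast
  then show ?case by (metis redU.U_appR redU.U_w wnormal_def)
qed (blast intro: redU.intros wnormal_simps)+

lemma choice_redex_not_value: "choice_redex V L R \<Longrightarrow> \<not> is_value V"
  by (auto elim: choice_redex.cases)

lemma wbeta_choice_redex_commute:
  "wbeta M M1 \<Longrightarrow> choice_redex M L R \<Longrightarrow>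
    \<exists>L' R'. wbeta L L' \<and> wbeta R R' \<and> choice_redex M1 L' R'"
proof (induction arbitrary: L R rule: wbeta.induct)
  case (wbeta_root V M)
  from wbeta_root.prems show ?case
    by cases (use wbeta_root.hyps choice_redex_not_value in \<open>auto elim: choice_redex.cases\<close>)
next
  case (wbeta_appL M M' N)
  from wbeta_appL.prems show ?case
  proof cases
    case (cr_appL X Y)
    then show ?thesis using wbeta_appL.IH[of X Y] by (meson choice_redex.cr_appL wbeta.wbeta_appL)
  next
    case (cr_appR X Y)
    then show ?thesis using wbeta_appL.hyps by (meson choice_redex.cr_appR wbeta.wbeta_appL)
  qed
next
  case (wbeta_appR N N' M)
  from wbeta_appR.prems show ?case
  proof cases
    case (cr_appL X Y)
    then show ?thesis using wbeta_appR.hyps by (meson choice_redex.cr_appL wbeta.wbeta_appR)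
  next
    case (cr_appR X Y)
    then show ?thesis using wbeta_appR.IH[of X Y] by (meson choice_redex.cr_appR wbeta.wbeta_appR)
  qed
qed

lemma choice_redex_diamond:
  "choice_redex M L1 R1 \<Longrightarrow> choice_redex M L2 R2 \<Longrightarrow>
    (L1 = L2 \<and> R1 = R2) \<or>
    (\<exists>A B C D. choice_redex L1 A B \<and> choice_redex R1 C D \<and>
       choice_redex L2 A C \<and> choice_redex R2 B D)"
proof (induction arbitrary: L2 R2 rule: choice_redex.induct)
  case (cr_root P Q)
  then show ?case by (auto elim: choice_redex.cases)
next
  case (cr_appL M L R N)
  from cr_appL.prems show ?case
  proof cases
    case (cr_appL X Y)
    from cr_appL.IH[OF cr_appL(3)] show ?thesis
    proof (elim disjE exE conjE)
      fix A B C D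
      assume "choice_redex L A B" "choice_redex R C D" "choice_redex X A C" "choice_redex Y B D"
      then show ?thesis unfolding cr_appL(1,2)
        by (intro disjI2 exI[of _ "App A N"] exI[of _ "App B N"] exI[of _ "App C N"] exI[of _ "App D N"])
           (auto intro: choice_redex.intros)
    qed (simp add: cr_appL)
  next
    case (cr_appR X Y)
    then show ?thesis using cr_appL.hyps
      by (intro disjI2 exI[of _ "App L X"] exI[of _ "App L Y"] exI[of _ "App R X"] exI[of _ "App R Y"])
         (auto intro: choice_redex.intros)
  qed
next
  case (cr_appR N L R M)
  from cr_appR.prems show ?case
  proof cases
    case (cr_appL X Y)
    then show ?thesis using cr_appR.hyps
      by (intro disjI2 exI[of _ "App X L"] exI[of _ "App X R"] exI[of _ "App Y L"] exI[of _ "App Y R"])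
         (auto intro: choice_redex.intros)
  next
    case (cr_appR X Y)
    from cr_appR.IH[OF cr_appR(3)] show ?thesis
    proof (elim disjE exE conjE)
      fix A B C D
      assume "choice_redex L A B" "choice_redex R C D" "choice_redex X A C" "choice_redex Y B D"
      then show ?thesis unfolding cr_appR(1,2)
        by (intro disjI2 exI[of _ "App M A"] exI[of _ "App M B"] exI[of _ "App M C"] exI[of _ "App M D"])
           (auto intro: choice_redex.intros)
    qed (simp add: cr_appR)
  qed
qed

lemma surface_normal_iff: "surface_normal M \<longleftrightarrow> wnormal M \<and> (\<forall>L R. \<not> choice_redex M L R)"
  unfolding surface_normal_def sred_def red_oplus_def wnormal_def by auto

lemma surface_normal_Lam [simp]: "surface_normal (Lam P)"
  by (auto simp: surface_normal_iff elim: choice_redex.cases)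

lemma not_surface_normal_Choice [simp]: "\<not> surface_normal (Choice P Q)"
  by (auto simp: surface_normal_iff intro: choice_redex.cr_root)

lemma surface_normal_App_iff:
  "surface_normal (App P Q) \<longleftrightarrow> wnormal (App P Q) \<and> surface_normal P \<and> surface_normal Q"
  by (auto simp: surface_normal_iff wnormal_App_iff intro: choice_redex.intros elim: choice_redex.cases)

lemma redU_preserves_surface_normal: "redU M M' \<Longrightarrow> surface_normal M \<Longrightarrow> surface_normal M'"
proof (induction rule: redU.induct)
  case (U_w M M')
  then show ?case by (simp add: surface_normal_iff wnormal_def)
next
  case (U_appL P Q P')
  then show ?case by (meson surface_normal_App_iff wnormal_App_redU)
next
  case (U_appR P Q Q')
  then show ?case by (meson surface_normal_App_iff wnormal_App_redU)
qed simp_all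

lemma sred_not_normal: "sred M m \<Longrightarrow> \<not> normal M"
  by (auto simp: normal_def red_def sred_def dest: wbeta_imp_beta)

lemma redE_not_normal: "redE M m \<Longrightarrow> \<not> normal M"
  by (induction rule: redE.induct)
     (auto simp: normal_def red_def sred_def dest: wbeta_imp_beta redU_imp_beta)

lemma redE_exists: "\<not> normal M \<Longrightarrow> \<exists>m. redE M m"
proof (cases "surface_normal M")
  case False
  then show ?thesis using redE.E_surf surface_normal_def by blast
next
  case True
  assume "\<not> normal M"
  with True obtain M' where "beta M M'"
    by (auto simp: normal_def red_def surface_normal_def sred_def)
  then obtain M'' where "redU M M''" using beta_imp_ex_redU by blast
  then show ?thesis using True redE.E_U by blast
qed

lemma scale_empty [simp]: "scale p {#} = {#}"
  and scale_add [simp]: "scale p (a + b) = scale p a + scale p b"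
  and scale_add_mset [simp]: "scale p (add_mset (q, M) a) = add_mset (p * q, M) (scale p a)"
  and scale_dirac [simp]: "scale p (dirac M) = {#(p, M)#}"
  by (simp_all add: scale_def dirac_def)

lemma scale_one [simp]: "scale 1 m = m"
  by (induction m) (auto simp: scale_def)

lemma scale_scale [simp]: "scale p (scale q m) = scale (p * q) m"
  by (induction m) (auto simp: scale_def mult.assoc)

lemma scale_sum_mset: "scale p (sum_mset X) = sum_mset (image_mset (scale p) X)"
  by (induction X) auto

definition family_source :: "(real \<times> trm \<times> mdist) multiset \<Rightarrow> mdist" where
  "family_source F = image_mset (\<lambda>(p, M, _). (p, M)) F"

definition family_target :: "(real \<times> trm \<times> mdist) multiset \<Rightarrow> mdist" where
  "family_target F = sum_mset (image_mset (\<lambda>(p, _, m). scale p m) F)"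

lemma family_simps [simp]:
  "family_source {#} = {#}" "family_target {#} = {#}"
  "family_source (F + G) = family_source F + family_source G"
  "family_target (F + G) = family_target F + family_target G"
  "family_source (add_mset (p, M, m) F) = add_mset (p, M) (family_source F)"
  "family_target (add_mset (p, M, m) F) = scale p m + family_target F"
  by (simp_all add: family_source_def family_target_def)

lemma liftE_family:
  "\<forall>(p, M, m) \<in># F. liftE (dirac M) m \<Longrightarrow> liftE (family_source F) (family_target F)"
  unfolding family_source_def family_target_def by (rule liftE.L_sum) auto

lemma liftE_familyE:
  assumes "liftE a b"
  obtains F where "\<forall>(p, M, m) \<in># F. liftE (dirac M) m" "a = family_source F" "b = family_target F"
  using assms
proof cases
  case (L_normal M)
  then show ?thesis
    using that[of "{#(1, M, dirac M)#}"] liftE.L_normal by (simp add: dirac_def)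
next
  case (L_step M)
  then show ?thesis
    using that[of "{#(1, M, b)#}"] liftE.L_step by (simp add: dirac_def)
next
  case (L_sum F)
  then show ?thesis
    using that[of F] by (auto simp: family_source_def family_target_def case_prod_beta)
qed

lemma liftE_add: "liftE a s \<Longrightarrow> liftE b t \<Longrightarrow> liftE (a + b) (s + t)"
proof -
  assume "liftE a s" "liftE b t"
  then obtain F G where
    F: "\<forall>(p, M, m) \<in># F. liftE (dirac M) m" "a = family_source F" "s = family_target F" and
    G: "\<forall>(p, M, m) \<in># G. liftE (dirac M) m" "b = family_source G" "t = family_target G"
    by (metis liftE_familyE)
  have "liftE (family_source (F + G)) (family_target (F + G))"
    by (rule liftE_family) (use F(1) G(1) in auto)
  then show ?thesis using F G by simp
qed

lemma liftE_scale: "liftE a s \<Longrightarrow> liftE (scale q a) (scale q s)"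
proof -
  assume "liftE a s"
  then obtain F where F: "\<forall>(p, M, m) \<in># F. liftE (dirac M) m" "a = family_source F" "s = family_target F"
    by (rule liftE_familyE)
  define F' where "F' = image_mset (\<lambda>(p, M, m). (q * p, M, m)) F"
  have "liftE (family_source F') (family_target F')"
    by (rule liftE_family) (use F(1) in \<open>auto simp: F'_def\<close>)
  moreover have "family_source F' = scale q a"
    unfolding F'_def F(2) family_source_def scale_def
    by (simp add: multiset.map_comp case_prod_beta comp_def)
  moreover have "family_target F' = scale q s"
    unfolding F'_def F(3) family_target_def scale_sum_mset
    by (simp add: multiset.map_comp case_prod_beta comp_def)
  ultimately show ?thesis by simp
qed

lemma liftE_empty_iff: "liftE {#} n \<longleftrightarrow> n = {#}"
proof
  assume "liftE {#} n"
  then show "n = {#}"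
    by (rule liftE_familyE) (simp add: family_source_def)
next
  assume "n = {#}"
  then show "liftE {#} n"
    using liftE_family[of "{#}"] by simp
qed

lemma liftE_add_mset_iff:
  "liftE (add_mset (p, M) m) n \<longleftrightarrow> (\<exists>t s. liftE (dirac M) t \<and> liftE m s \<and> n = scale p t + s)"
proof
  assume "liftE (add_mset (p, M) m) n"
  then obtain F where F: "\<forall>(p, M, m) \<in># F. liftE (dirac M) m"
    "add_mset (p, M) m = family_source F" "n = family_target F"
    by (rule liftE_familyE)
  then obtain F' t where "F = add_mset (p, M, t) F'" "m = family_source F'"
    using msed_map_invR[of _ F "(p, M)" m] unfolding family_source_def by force
  with F show "\<exists>t s. liftE (dirac M) t \<and> liftE m s \<and> n = scale p t + s"
    using liftE_family[of F'] by auto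
next
  assume "\<exists>t s. liftE (dirac M) t \<and> liftE m s \<and> n = scale p t + s"
  then show "liftE (add_mset (p, M) m) n"
    using liftE_add liftE_scale by fastforce
qed

lemma liftE_dirac_iff: "liftE (dirac M) m \<longleftrightarrow> (normal M \<and> m = dirac M) \<or> redE M m"
proof
  assume "liftE (dirac M) m"
  then show "(normal M \<and> m = dirac M) \<or> redE M m"
  proof (induction "dirac M" m rule: liftE.induct)
    case (L_sum F)
    then have "size F = 1" by (metis dirac_def size_image_mset size_single)
    then obtain p N t where "F = {#(p, N, t)#}"
      by (metis prod_cases3 size_1_singleton_mset)
    with L_sum show ?case by (auto simp: dirac_def)
  qed (auto simp: dirac_def)
qed (auto intro: liftE.intros)

lemma liftE_exists: "\<exists>n. liftE m n"
proof (induction m)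
  case empty
  then show ?case using liftE_empty_iff by blast
next
  case (add x m)
  obtain p M where "x = (p, M)" by fastforce
  moreover obtain t where "liftE (dirac M) t"
    using liftE_dirac_iff redE_exists by blast
  ultimately show ?case using add liftE_add_mset_iff by blast
qed

definition nowhere_normal :: "mdist \<Rightarrow> bool" where
  "nowhere_normal m \<longleftrightarrow> (\<forall>x \<in># m. \<not> normal (snd x))"

definition strictly_joinable :: "mdist \<Rightarrow> mdist \<Rightarrow> bool" where
  "strictly_joinable a b \<longleftrightarrow> nowhere_normal a \<and> nowhere_normal b \<and> (\<exists>s. liftE a s \<and> liftE b s)"

lemma nowhere_normal_simps [simp]:
  "nowhere_normal (dirac M) \<longleftrightarrow> \<not> normal M"
  "nowhere_normal {#(p, L), (q, R)#} \<longleftrightarrow> \<not> normal L \<and> \<not> normal R"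
  by (auto simp: nowhere_normal_def dirac_def)

lemma strictly_joinable_sym: "strictly_joinable a b \<Longrightarrow> strictly_joinable b a"
  unfolding strictly_joinable_def by blast

lemma sred_imp_redE: "sred M m \<Longrightarrow> redE M m"
  using redE.E_surf surface_normal_def by blast

lemma liftE_half_half:
  "liftE (dirac L) x \<Longrightarrow> liftE (dirac R) y \<Longrightarrow>
    liftE {#(1/2, L), (1/2, R)#} (scale (1/2) x + scale (1/2) y)"
proof -
  assume "liftE (dirac L) x" "liftE (dirac R) y"
  then have "liftE (add_mset (1/2, L) (add_mset (1/2, R) {#})) (scale (1/2) x + (scale (1/2) y + {#}))"
    unfolding liftE_add_mset_iff liftE_empty_iff by blast
  then show ?thesis by simp
qed

lemma choice_redex_imp_sred: "choice_redex M L R \<Longrightarrow> sred M {#(1/2, L), (1/2, R)#}"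
  by (auto simp: sred_def red_oplus_def)

lemma wbeta_imp_sred: "wbeta M N \<Longrightarrow> sred M (dirac N)"
  by (auto simp: sred_def)

lemma common_redE_strictly_joinable:
  "redE M1 s \<Longrightarrow> redE M2 s \<Longrightarrow> strictly_joinable (dirac M1) (dirac M2)"
  unfolding strictly_joinable_def using liftE.L_step redE_not_normal by auto

lemma wbeta_choice_strictly_joinable:
  assumes "wbeta M M1" and "choice_redex M L R"
  shows "strictly_joinable (dirac M1) {#(1/2, L), (1/2, R)#}"
proof -
  obtain L' R' where steps: "wbeta L L'" "wbeta R R'" and cr: "choice_redex M1 L' R'"
    using wbeta_choice_redex_commute[OF assms] by blast
  have "liftE (dirac M1) {#(1/2, L'), (1/2, R')#}"
    using cr by (intro liftE.L_step sred_imp_redE choice_redex_imp_sred)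
  moreover have "liftE {#(1/2, L), (1/2, R)#} {#(1/2, L'), (1/2, R')#}"
    using liftE_half_half[of L "dirac L'" R "dirac R'"] steps
    by (simp add: liftE.L_step sred_imp_redE wbeta_imp_sred add_mset_commute)
  ultimately show ?thesis
    using cr steps unfolding strictly_joinable_def
    by (auto dest!: choice_redex_imp_sred wbeta_imp_sred dest: sred_not_normal)
qed

lemma choice_choice_strictly_joinable:
  assumes "choice_redex M L1 R1" and "choice_redex M L2 R2"
  shows "(L1 = L2 \<and> R1 = R2) \<or> strictly_joinable {#(1/2, L1), (1/2, R1)#} {#(1/2, L2), (1/2, R2)#}"
  using choice_redex_diamond[OF assms]
proof (elim disjE exE conjE)
  fix A B C D
  assume cr: "choice_redex L1 A B" "choice_redex R1 C D" "choice_redex L2 A C" "choice_redex R2 B D"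
  have "liftE {#(1/2, L1), (1/2, R1)#}
      (scale (1/2) {#(1/2, A), (1/2, B)#} + scale (1/2) {#(1/2, C), (1/2, D)#})"
    by (intro liftE_half_half liftE.L_step sred_imp_redE choice_redex_imp_sred cr)
  moreover have "liftE {#(1/2, L2), (1/2, R2)#}
      (scale (1/2) {#(1/2, A), (1/2, C)#} + scale (1/2) {#(1/2, B), (1/2, D)#})"
    by (intro liftE_half_half liftE.L_step sred_imp_redE choice_redex_imp_sred cr)
  moreover have "scale (1/2) {#(1/2, A), (1/2, C)#} + scale (1/2) {#(1/2, B), (1/2, D)#}
      = scale (1/2) {#(1/2, A), (1/2, B)#} + scale (1/2) {#(1/2, C), (1/2, D)#}"
    by (simp add: add_mset_commute)
  ultimately have "\<exists>s. liftE {#(1/2, L1), (1/2, R1)#} s \<and> liftE {#(1/2, L2), (1/2, R2)#} s"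
    by metis
  then show ?thesis
    using cr unfolding strictly_joinable_def
    by (auto dest!: choice_redex_imp_sred dest: sred_not_normal)
qed simp

lemma sred_strictly_joinable: "sred M a \<Longrightarrow> sred M b \<Longrightarrow> a = b \<or> strictly_joinable a b"
proof -
  assume "sred M a" "sred M b"
  then consider
      (beta_beta) M1 M2 where "wbeta M M1" "a = dirac M1" "wbeta M M2" "b = dirac M2"
    | (beta_choice) M1 L R where
        "wbeta M M1" "a = dirac M1" "choice_redex M L R" "b = {#(1/2, L), (1/2, R)#}"
    | (choice_beta) M1 L R where
        "choice_redex M L R" "a = {#(1/2, L), (1/2, R)#}" "wbeta M M1" "b = dirac M1"
    | (choice_choice) L1 R1 L2 R2 where
        "choice_redex M L1 R1" "a = {#(1/2, L1), (1/2, R1)#}"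
        "choice_redex M L2 R2" "b = {#(1/2, L2), (1/2, R2)#}"
    unfolding sred_def red_oplus_def by blast
  then show ?thesis
  proof cases
    case beta_beta
    then show ?thesis
      using wbeta_diamond common_redE_strictly_joinable wbeta_imp_sred sred_imp_redE by metis
  next
    case beta_choice
    then show ?thesis using wbeta_choice_strictly_joinable by blast
  next
    case choice_beta
    then show ?thesis using wbeta_choice_strictly_joinable strictly_joinable_sym by blast
  next
    case choice_choice
    then show ?thesis using choice_choice_strictly_joinable by fastforce
  qed
qed

lemma redE_strictly_joinable:
  assumes "redE M a" and "redE M b"
  shows "a = b \<or> strictly_joinable a b"
  using assms(1)
proof cases
  case E_surf
  with assms(2) show ?thesis by cases (auto dest: sred_strictly_joinable)
next
  case (E_U M1)
  from assms(2) show ?thesis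
  proof cases
    case (E_U M2)
    then have "M1 = M2 \<or> (\<exists>N. redU M1 N \<and> redU M2 N)"
      using \<open>redU M M1\<close> redU_diamond by blast
    moreover have "surface_normal M1" "surface_normal M2"
      using E_U \<open>redU M M1\<close> redU_preserves_surface_normal by blast+
    ultimately show ?thesis
      using \<open>a = dirac M1\<close> \<open>b = dirac M2\<close> common_redE_strictly_joinable redE.E_U by metis
  qed (use E_U in simp)
qed

lemma obs_Nnf_add [simp]: "obs_Nnf (a + b) N = obs_Nnf a N + obs_Nnf b N"
  by (simp add: obs_Nnf_def)

lemma obs_Nnf_scale [simp]: "obs_Nnf (scale p a) N = p * obs_Nnf a N"
  by (induction a) (auto simp: obs_Nnf_def scale_def algebra_simps)

lemma obs_Nnf_nowhere_normal: "nowhere_normal m \<Longrightarrow> obs_Nnf m N = 0"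
  unfolding obs_Nnf_def nowhere_normal_def by (induction m) auto

lemma liftE_dirac_diamond:
  assumes "liftE (dirac M) a" and "liftE (dirac M) b"
  shows "\<exists>s. liftE a s \<and> liftE b s \<and> obs_Nnf a = obs_Nnf b"
proof -
  have "a = b \<or> strictly_joinable a b"
  proof (cases "normal M")
    case True
    then show ?thesis using assms liftE_dirac_iff redE_not_normal by metis
  next
    case False
    then show ?thesis using assms liftE_dirac_iff redE_strictly_joinable by blast
  qed
  then show ?thesis
  proof
    assume "a = b"
    then show ?thesis using liftE_exists by blast
  next
    assume "strictly_joinable a b"
    then show ?thesis
      unfolding strictly_joinable_def by (auto simp: fun_eq_iff obs_Nnf_nowhere_normal)
  qed
qed

lemma liftE_diamond:
  "liftE m a \<Longrightarrow> liftE m b \<Longrightarrow> \<exists>s. liftE a s \<and> liftE b s \<and> obs_Nnf a = obs_Nnf b"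
proof (induction m arbitrary: a b)
  case empty
  then show ?case by (simp add: liftE_empty_iff)
next
  case (add x m)
  obtain p M where x: "x = (p, M)" by fastforce
  from add.prems obtain ta sa tb sb where
    a: "liftE (dirac M) ta" "liftE m sa" "a = scale p ta + sa" and
    b: "liftE (dirac M) tb" "liftE m sb" "b = scale p tb + sb"
    unfolding x liftE_add_mset_iff by blast
  obtain t where t: "liftE ta t" "liftE tb t" "obs_Nnf ta = obs_Nnf tb"
    using liftE_dirac_diamond[OF a(1) b(1)] by blast
  obtain s where s: "liftE sa s" "liftE sb s" "obs_Nnf sa = obs_Nnf sb"
    using add.IH[OF a(2) b(2)] by blast
  have "liftE a (scale p t + s)" "liftE b (scale p t + s)"
    using a b t s by (simp_all add: liftE_add liftE_scale)
  moreover have "obs_Nnf a = obs_Nnf b"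
    using a b t s by (simp add: fun_eq_iff)
  ultimately show ?case by blast
qed

abbreviation mass :: "mdist \<Rightarrow> real" where
  "mass m \<equiv> sum_mset (image_mset fst m)"

abbreviation unit_weights :: "mdist \<Rightarrow> bool" where
  "unit_weights m \<equiv> \<forall>x \<in># m. 0 < fst x \<and> fst x \<le> 1"

lemma mass_scale: "mass (scale p m) = p * mass m"
  by (induction m) (auto simp: scale_def algebra_simps)

lemma unit_weights_scale: "0 < p \<Longrightarrow> p \<le> 1 \<Longrightarrow> unit_weights m \<Longrightarrow> unit_weights (scale p m)"
  unfolding scale_def by (auto simp: mult_le_one)

lemma liftE_dirac_weights: "liftE (dirac M) t \<Longrightarrow> unit_weights t \<and> mass t = 1"
proof -
  assume "liftE (dirac M) t"
  then consider M' where "t = dirac M'" | L R where "t = {#(1/2, L), (1/2, R)#}"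
    unfolding liftE_dirac_iff by (elim disjE conjE redE.cases) (auto simp: sred_def red_oplus_def)
  then show ?thesis by cases (simp_all add: dirac_def)
qed

lemma liftE_preserves_weights: "liftE n s \<Longrightarrow> unit_weights n \<Longrightarrow> unit_weights s \<and> mass s = mass n"
proof (induction n arbitrary: s)
  case empty
  then show ?case by (simp add: liftE_empty_iff)
next
  case (add x n)
  obtain p M where x: "x = (p, M)" by fastforce
  from add.prems obtain t s' where t: "liftE (dirac M) t" and s': "liftE n s'" "s = scale p t + s'"
    unfolding x liftE_add_mset_iff by blast
  have p: "0 < p" "p \<le> 1" using add.prems(2) x by auto
  have t_weights: "unit_weights t" "mass t = 1" using liftE_dirac_weights[OF t] by simp_all
  have "unit_weights (scale p t)" using unit_weights_scale[OF p t_weights(1)] .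
  moreover have "mass (scale p t) = p" using mass_scale t_weights(2) by simp
  moreover have "unit_weights s' \<and> mass s' = mass n" using add.IH[OF s'(1)] add.prems(2) by simp
  ultimately show ?case by (simp add: x s'(2) ball_Un)
qed

lemma liftE_preserves_mdist: "liftE n s \<Longrightarrow> is_mdist n \<Longrightarrow> is_mdist s"
proof -
  assume "liftE n s" "is_mdist n"
  then have "unit_weights s \<and> mass s = mass n"
    using liftE_preserves_weights unfolding is_mdist_def by blast
  with \<open>is_mdist n\<close> show ?thesis unfolding is_mdist_def by simp
qed

theorem mainTheorem7:
  assumes "is_mdist m" and "is_mdist n1" and "is_mdist n2"
    and "liftE m n1" and "liftE m n2"
  shows "(n1 = n2 \<or> (\<exists>s. is_mdist s \<and> liftE n1 s \<and> liftE n2 s))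
         \<and> obs_Nnf n1 = obs_Nnf n2"
proof -
  obtain s where "liftE n1 s" "liftE n2 s" "obs_Nnf n1 = obs_Nnf n2"
    using liftE_diamond[OF assms(4,5)] by blast
  moreover have "is_mdist s"
    using liftE_preserves_mdist \<open>liftE n1 s\<close> assms(2) by blast
  ultimately show ?thesis by blast
qed

end
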